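(* Let $-\infty<a<b<\infty$, $K\in\mathbb{R}$, $g\in C^1(\mathbb{R})$, and let $f(x,u,p)=(p-K)^2+g(u)$ for $(x,u,p)\in[a,b]\times\mathbb{R}\times\mathbb{R}$, with $\Phi(u)=\int_a^b f(x,u(x),u'(x))\,dx$ for $u\in C^1([a,b])$. Let $I^{D}_a,I^{D}_b\subset\{1\}$ be arbitrary, let $u^0\in C^1([a,b])$, and let $\mathcal{M}=u^0+C^1_{D}$. If $u^0$ is a weak minimizer of $\Phi$ in $\mathcal{M}$, then $u^0$ is a strong minimizer of $\Phi$ in $\mathcal{M}$.
   Context: Here $N=1$ and $C^1_{D}=\{v\in C^1([a,b]): v(a)=0 \text{ if } 1\in I^{D}_a,\ v(b)=0 \text{ if } 1\in I^{D}_b\}$ (so at each endpoint the value is either fixed to that of $u^0$ or free). A function $w\in\mathcal{M}$ is a weak (resp. strong) minimizer of $\Phi$ in $\mathcal{M}$ if there is $\varepsilon>0$ such that $\Phi(v)\ge\Phi(w)$ for all $v\in\mathcal{M}$ with $\|v-w\|_{C^1}<\varepsilon$ (resp. $\|v-w\|_{C}<\varepsilon$), where $\|v\|_{C^1}=\max|v|+\max|v'|$ and $\|v\|_C=\max|v|$ over $[a,b]$. *)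

theory Defs
  imports "HOL-Analysis.Analysis"
begin

definition C1_on :: "real \<Rightarrow> real \<Rightarrow> (real \<Rightarrow> real) \<Rightarrow> bool" where
  "C1_on a b u \<longleftrightarrow> (\<exists>u'. continuous_on {a..b} u' \<and>
      (\<forall>x\<in>{a..b}. (u has_real_derivative u' x) (at x within {a..b})))"

definition dC1 :: "real \<Rightarrow> real \<Rightarrow> (real \<Rightarrow> real) \<Rightarrow> real \<Rightarrow> real" where
  "dC1 a b u x = vector_derivative u (at x within {a..b})"

definition supnorm :: "real \<Rightarrow> real \<Rightarrow> (real \<Rightarrow> real) \<Rightarrow> real" where
  "supnorm a b v = (SUP x\<in>{a..b}. \<bar>v x\<bar>)"

definition C1norm :: "real \<Rightarrow> real \<Rightarrow> (real \<Rightarrow> real) \<Rightarrow> real" where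
  "C1norm a b v = supnorm a b v + supnorm a b (dC1 a b v)"

definition Phi :: "real \<Rightarrow> real \<Rightarrow> real \<Rightarrow> (real \<Rightarrow> real) \<Rightarrow> (real \<Rightarrow> real) \<Rightarrow> real" where
  "Phi a b K g u = integral {a..b} (\<lambda>x. (dC1 a b u x - K)\<^sup>2 + g (u x))"

text \<open>M = u0 + C^1_D; Da (resp. Db) means 1 \<in> I^D_a (resp. 1 \<in> I^D_b).\<close>
definition admissible :: "real \<Rightarrow> real \<Rightarrow> bool \<Rightarrow> bool \<Rightarrow> (real \<Rightarrow> real) \<Rightarrow> (real \<Rightarrow> real) set" where
  "admissible a b Da Db u0 = {v. C1_on a b v \<and> (Da \<longrightarrow> v a = u0 a) \<and> (Db \<longrightarrow> v b = u0 b)}"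

definition weak_minimizer where
  "weak_minimizer a b F M w \<longleftrightarrow> w \<in> M \<and>
     (\<exists>\<epsilon>>0. \<forall>v\<in>M. C1norm a b (\<lambda>x. v x - w x) < \<epsilon> \<longrightarrow> F v \<ge> F w)"

definition strong_minimizer where
  "strong_minimizer a b F M w \<longleftrightarrow> w \<in> M \<and>
     (\<exists>\<epsilon>>0. \<forall>v\<in>M. supnorm a b (\<lambda>x. v x - w x) < \<epsilon> \<longrightarrow> F v \<ge> F w)"

end

theory Submission
  imports Defs
begin

text \<open>
  Because the integrand is quadratic in the derivative, the increment Phi(u0 + h) - Phi(u0) is
  exactly the first variation of Phi at u0 in direction h, plus the Dirichlet energy of h, plus
  the error of linearising g along u0, which is small compared with max |h|.  Weak minimality
  makes the first variation vanish on all admissible variations.  For a C^0-small variation h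
  there are two cases.  If the energy of h is large compared with max |h|, it absorbs the
  linearisation error.  Otherwise clip h' at a level M and repair the boundary values: this
  gives a C^1-small variation k, so Phi(u0 + k) >= Phi(u0) by weak minimality, and the energy
  lost by clipping, at least 2M times the L^1 distance of h' from its clipping, pays for the
  linearisation error when h is compared with k.
\<close>

definition C1_D :: "real \<Rightarrow> real \<Rightarrow> bool \<Rightarrow> bool \<Rightarrow> (real \<Rightarrow> real) set" where
  "C1_D a b Da Db = {w. C1_on a b w \<and> (Da \<longrightarrow> w a = 0) \<and> (Db \<longrightarrow> w b = 0)}"

definition first_variation ::
    "real \<Rightarrow> real \<Rightarrow> real \<Rightarrow> (real \<Rightarrow> real) \<Rightarrow> (real \<Rightarrow> real) \<Rightarrow> (real \<Rightarrow> real) \<Rightarrow> real" where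
  "first_variation a b K G u w =
     integral {a..b} (\<lambda>x. 2 * (dC1 a b u x - K) * dC1 a b w x + G (u x) * w x)"

lemma dC1_eq:
  assumes "a < b" "x \<in> {a..b}" "(v has_real_derivative d) (at x within {a..b})"
  shows "dC1 a b v x = d"
  unfolding dC1_def using assms vector_derivative_within_cbox[of a b x v d]
  by (simp add: has_real_derivative_iff_has_vector_derivative)

lemma C1_onI:
  assumes "continuous_on {a..b} d" "\<And>x. x \<in> {a..b} \<Longrightarrow> (v has_real_derivative d x) (at x within {a..b})"
  shows "C1_on a b v"
  unfolding C1_on_def using assms by blast

lemma
  assumes "a < b" "C1_on a b v"
  shows C1_on_has_derivative:
      "\<And>x. x \<in> {a..b} \<Longrightarrow> (v has_real_derivative dC1 a b v x) (at x within {a..b})"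
    and continuous_on_dC1: "continuous_on {a..b} (dC1 a b v)"
proof -
  obtain d where d: "continuous_on {a..b} d"
    and v': "\<And>x. x \<in> {a..b} \<Longrightarrow> (v has_real_derivative d x) (at x within {a..b})"
    using assms(2) unfolding C1_on_def by blast
  have "dC1 a b v x = d x" if "x \<in> {a..b}" for x
    using dC1_eq[OF assms(1) that v'[OF that]] .
  then show "(v has_real_derivative dC1 a b v x) (at x within {a..b})" if "x \<in> {a..b}" for x
    using v' that by simp
  show "continuous_on {a..b} (dC1 a b v)"
    using continuous_on_eq[OF d] \<open>\<And>x. x \<in> {a..b} \<Longrightarrow> dC1 a b v x = d x\<close> by simp
qed

lemma C1_on_imp_continuous_on:
  assumes "a < b" "C1_on a b v"
  shows "continuous_on {a..b} v"
  unfolding continuous_on_eq_continuous_within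
  using C1_on_has_derivative[OF assms] DERIV_continuous by blast

lemma
  assumes "a < b" "C1_on a b u" "C1_on a b v"
  shows C1_on_add: "C1_on a b (\<lambda>x. u x + v x)"
    and dC1_add: "\<And>x. x \<in> {a..b} \<Longrightarrow> dC1 a b (\<lambda>x. u x + v x) x = dC1 a b u x + dC1 a b v x"
proof -
  have der: "((\<lambda>x. u x + v x) has_real_derivative dC1 a b u x + dC1 a b v x) (at x within {a..b})"
    if "x \<in> {a..b}" for x
    using that by (auto intro!: derivative_eq_intros C1_on_has_derivative assms)
  show "C1_on a b (\<lambda>x. u x + v x)"
    using assms by (intro C1_onI[OF _ der] continuous_intros continuous_on_dC1)
  show "dC1 a b (\<lambda>x. u x + v x) x = dC1 a b u x + dC1 a b v x" if "x \<in> {a..b}" for x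
    using dC1_eq[OF assms(1) that der[OF that]] .
qed

lemma C1_on_diff:
  assumes "a < b" "C1_on a b u" "C1_on a b v"
  shows "C1_on a b (\<lambda>x. u x - v x)"
proof -
  have der: "((\<lambda>x. u x - v x) has_real_derivative dC1 a b u x - dC1 a b v x) (at x within {a..b})"
    if "x \<in> {a..b}" for x
    using that by (auto intro!: derivative_eq_intros C1_on_has_derivative assms)
  show ?thesis
    using assms by (intro C1_onI[OF _ der] continuous_intros continuous_on_dC1)
qed

lemma
  assumes "a < b" "C1_on a b v"
  shows C1_on_cmult: "C1_on a b (\<lambda>x. c * v x)"
    and dC1_cmult: "\<And>x. x \<in> {a..b} \<Longrightarrow> dC1 a b (\<lambda>x. c * v x) x = c * dC1 a b v x"
proof -
  have der: "((\<lambda>x. c * v x) has_real_derivative c * dC1 a b v x) (at x within {a..b})"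
    if "x \<in> {a..b}" for x
    using that by (auto intro!: derivative_eq_intros C1_on_has_derivative assms)
  show "C1_on a b (\<lambda>x. c * v x)"
    using assms by (intro C1_onI[OF _ der] continuous_intros continuous_on_dC1)
  show "dC1 a b (\<lambda>x. c * v x) x = c * dC1 a b v x" if "x \<in> {a..b}" for x
    using dC1_eq[OF assms(1) that der[OF that]] .
qed

lemma integral_dC1:
  assumes "a < b" "C1_on a b v"
  shows "integral {a..b} (dC1 a b v) = v b - v a"
  using assms C1_on_has_derivative[OF assms]
  by (intro integral_unique fundamental_theorem_of_calculus)
     (auto simp: has_real_derivative_iff_has_vector_derivative)

lemma abs_le_supnorm:
  assumes "continuous_on {a..b} v" "x \<in> {a..b}"
  shows "\<bar>v x\<bar> \<le> supnorm a b v"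
proof -
  have "compact ((\<lambda>x. \<bar>v x\<bar>) ` {a..b})"
    using assms(1) by (intro compact_continuous_image continuous_intros) auto
  then have "bdd_above ((\<lambda>x. \<bar>v x\<bar>) ` {a..b})"
    by (intro bounded_imp_bdd_above compact_imp_bounded)
  then show ?thesis
    unfolding supnorm_def using assms(2) by (rule cSUP_upper2) simp
qed

lemma supnorm_nonneg:
  assumes "a \<le> b" "continuous_on {a..b} v"
  shows "0 \<le> supnorm a b v"
  using abs_le_supnorm[OF assms(2), of a] assms(1) by simp

lemma supnorm_le:
  assumes "a \<le> b" "\<And>x. x \<in> {a..b} \<Longrightarrow> \<bar>v x\<bar> \<le> c"
  shows "supnorm a b v \<le> c"
  unfolding supnorm_def using assms by (intro cSUP_least) auto

lemma C1norm_cmult_le: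
  assumes "a < b" "C1_on a b v"
  shows "C1norm a b (\<lambda>x. c * v x) \<le> \<bar>c\<bar> * C1norm a b v"
proof -
  have "supnorm a b (\<lambda>x. c * v x) \<le> \<bar>c\<bar> * supnorm a b v"
    using assms abs_le_supnorm[OF C1_on_imp_continuous_on[OF assms]]
    by (intro supnorm_le) (auto simp: abs_mult intro: mult_left_mono)
  moreover have "supnorm a b (dC1 a b (\<lambda>x. c * v x)) \<le> \<bar>c\<bar> * supnorm a b (dC1 a b v)"
    using assms abs_le_supnorm[OF continuous_on_dC1[OF assms]]
    by (intro supnorm_le) (auto simp: dC1_cmult abs_mult intro: mult_left_mono)
  ultimately show ?thesis
    by (simp add: C1norm_def distrib_left)
qed

lemma integral_abs_le_length_mult:
  fixes f :: "real \<Rightarrow> real"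
  assumes "a \<le> b" "continuous_on {a..b} f" "\<And>x. x \<in> {a..b} \<Longrightarrow> \<bar>f x\<bar> \<le> B"
  shows "integral {a..b} (\<lambda>x. \<bar>f x\<bar>) \<le> (b - a) * B"
proof -
  have "\<bar>integral {a..b} (\<lambda>x. \<bar>f x\<bar>)\<bar> \<le> B * (b - a)"
    using integral_bound[of a b "\<lambda>x. \<bar>f x\<bar>" B] assms by (auto intro!: continuous_intros)
  then show ?thesis
    by (simp add: mult.commute)
qed

lemma uniform_linearization:
  fixes g G :: "real \<Rightarrow> real"
  assumes g': "\<And>y. (g has_real_derivative G y) (at y)" and "continuous_on UNIV G"
    and "bounded U" and "\<eta> > 0"
  obtains r where "r > 0"
    "\<And>c y z. c \<in> U \<Longrightarrow> \<bar>y - c\<bar> \<le> r \<Longrightarrow> \<bar>z - c\<bar> \<le> r \<Longrightarrow>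
       \<bar>g y - g z - G c * (y - z)\<bar> \<le> \<eta> * \<bar>y - z\<bar>"
proof -
  obtain C where C: "\<And>c. c \<in> U \<Longrightarrow> \<bar>c\<bar> \<le> C"
    using \<open>bounded U\<close> by (auto simp: bounded_real)
  have "uniformly_continuous_on (cball 0 (C + 1)) G"
    by (intro compact_uniformly_continuous continuous_on_subset[OF \<open>continuous_on UNIV G\<close>]) auto
  then obtain d where "d > 0"
    and d: "\<And>s t. s \<in> cball 0 (C + 1) \<Longrightarrow> t \<in> cball 0 (C + 1) \<Longrightarrow> dist t s < d \<Longrightarrow>
                  dist (G t) (G s) < \<eta>"
    unfolding uniformly_continuous_on_def using \<open>\<eta> > 0\<close> by metis
  define r where "r = min 1 (d / 2)"
  have "\<bar>g y - g z - G c * (y - z)\<bar> \<le> \<eta> * \<bar>y - z\<bar>"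
    if "c \<in> U" "\<bar>y - c\<bar> \<le> r" "\<bar>z - c\<bar> \<le> r" for c y z
  proof -
    have "\<bar>G t - G c\<bar> \<le> \<eta>" if "t \<in> cball c r" for t
    proof -
      have "c \<in> cball 0 (C + 1)" "t \<in> cball 0 (C + 1)" "dist t c < d"
        using C[OF \<open>c \<in> U\<close>] that \<open>d > 0\<close> abs_minus_commute[of t c]
        by (auto simp: r_def dist_real_def)
      then show ?thesis
        using d by (fastforce simp: dist_real_def)
    qed
    moreover have "((\<lambda>t. g t - G c * t) has_field_derivative G t - G c) (at t within cball c r)" for t
      by (rule has_field_derivative_at_within, rule DERIV_diff[OF g' DERIV_cmult_Id])
    moreover have "y \<in> cball c r" "z \<in> cball c r"
      using that by (auto simp: dist_real_def)
    ultimately have "norm ((g y - G c * y) - (g z - G c * z)) \<le> \<eta> * norm (y - z)"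
      by (intro field_differentiable_bound[of "cball c r" "\<lambda>t. g t - G c * t" "\<lambda>t. G t - G c"]) auto
    then show ?thesis
      by (simp add: algebra_simps)
  qed
  moreover have "r > 0"
    using \<open>d > 0\<close> by (simp add: r_def)
  ultimately show ?thesis
    using that by blast
qed

lemma clip_square_gap:
  fixes M y :: real
  assumes "M > 0"
  shows "2 * M * \<bar>y - max (-M) (min M y)\<bar> \<le> y\<^sup>2 - (max (-M) (min M y))\<^sup>2"
proof -
  consider "y > M" | "y < -M" | "\<bar>y\<bar> \<le> M"
    by linarith
  then show ?thesis
  proof cases
    case 1
    then show ?thesis
      using assms zero_le_power2[of "y - M"] by (simp add: power2_eq_square algebra_simps)
  next
    case 2
    then show ?thesis
      using assms zero_le_power2[of "y + M"] by (simp add: power2_eq_square algebra_simps)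
  qed (simp add: abs_le_iff)
qed

lemma integral_square_add_const_le:
  fixes f :: "real \<Rightarrow> real"
  assumes "a \<le> b" "continuous_on {a..b} f" "c = 0 \<or> integral {a..b} f = - c * (b - a)"
  shows "integral {a..b} (\<lambda>x. (f x + c)\<^sup>2) \<le> integral {a..b} (\<lambda>x. (f x)\<^sup>2)"
proof -
  have f2: "(\<lambda>x. (f x)\<^sup>2) integrable_on {a..b}" and cf: "(\<lambda>x. 2 * c * f x) integrable_on {a..b}"
    using assms by (auto intro!: integrable_continuous_interval continuous_intros)
  have "integral {a..b} (\<lambda>x. (f x + c)\<^sup>2) = integral {a..b} (\<lambda>x. ((f x)\<^sup>2 + 2 * c * f x) + c\<^sup>2)"
    by (simp add: power2_eq_square algebra_simps)
  also have "\<dots> = integral {a..b} (\<lambda>x. (f x)\<^sup>2) + (2 * c * integral {a..b} f + c\<^sup>2 * (b - a))"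
    using assms integral_add[OF integrable_add[OF f2 cf] integrable_const_ivl] integral_add[OF f2 cf]
    by simp
  also have "\<dots> \<le> integral {a..b} (\<lambda>x. (f x)\<^sup>2)"
  proof (cases "c = 0")
    case False
    then have "integral {a..b} f = - c * (b - a)"
      using assms(3) by simp
    then have "2 * c * integral {a..b} f + c\<^sup>2 * (b - a) = - (c\<^sup>2 * (b - a))"
      by (simp only:) (simp add: power2_eq_square algebra_simps)
    moreover have "c\<^sup>2 * (b - a) \<ge> 0"
      using assms(1) by simp
    ultimately show ?thesis
      by linarith
  qed simp
  finally show ?thesis .
qed

lemma integral_clip_gap:
  fixes p :: "real \<Rightarrow> real"
  assumes "continuous_on {a..b} p" "M > 0"
  shows "2 * M * integral {a..b} (\<lambda>x. \<bar>p x - max (-M) (min M (p x))\<bar>)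
    \<le> integral {a..b} (\<lambda>x. (p x)\<^sup>2) - integral {a..b} (\<lambda>x. (max (-M) (min M (p x)))\<^sup>2)"
proof -
  have "2 * M * integral {a..b} (\<lambda>x. \<bar>p x - max (-M) (min M (p x))\<bar>)
      = integral {a..b} (\<lambda>x. 2 * M * \<bar>p x - max (-M) (min M (p x))\<bar>)"
    by simp
  also have "\<dots> \<le> integral {a..b} (\<lambda>x. (p x)\<^sup>2 - (max (-M) (min M (p x)))\<^sup>2)"
    using assms clip_square_gap
    by (intro integral_le) (auto intro!: integrable_continuous_interval continuous_intros)
  also have "\<dots> = integral {a..b} (\<lambda>x. (p x)\<^sup>2) - integral {a..b} (\<lambda>x. (max (-M) (min M (p x)))\<^sup>2)"
    using assms by (intro integral_diff) (auto intro!: integrable_continuous_interval continuous_intros)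
  finally show ?thesis .
qed

lemma abs_integral_upto_le:
  fixes f :: "real \<Rightarrow> real"
  assumes "continuous_on {a..b} f" "x \<in> {a..b}"
  shows "\<bar>integral {a..x} f\<bar> \<le> integral {a..b} (\<lambda>t. \<bar>f t\<bar>)"
proof -
  have sub: "{a..x} \<subseteq> {a..b}"
    using assms(2) by auto
  have "\<bar>integral {a..x} f\<bar> \<le> integral {a..x} (\<lambda>t. \<bar>f t\<bar>)"
    using continuous_on_subset[OF assms(1) sub] integral_norm_bound_integral[of f "{a..x}" "\<lambda>t. \<bar>f t\<bar>"]
    by (auto intro!: integrable_continuous_interval continuous_intros)
  also have "\<dots> \<le> integral {a..b} (\<lambda>t. \<bar>f t\<bar>)"
    using assms(1) sub continuous_on_subset[OF assms(1) sub]
    by (intro integral_subset_le) (auto intro!: integrable_continuous_interval continuous_intros)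
  finally show ?thesis .
qed

lemma boundary_corrector:
  fixes a b d :: real
  assumes "a < b"
  obtains \<alpha> \<beta> where "Da \<longrightarrow> \<alpha> = 0" "Db \<longrightarrow> \<alpha> + \<beta> * (b - a) = d"
    "\<beta> = 0 \<or> Da \<and> Db \<and> \<beta> * (b - a) = d" "\<bar>\<beta>\<bar> * (b - a) \<le> \<bar>d\<bar>"
    "\<And>x. x \<in> {a..b} \<Longrightarrow> \<bar>\<alpha> + \<beta> * (x - a)\<bar> \<le> \<bar>d\<bar>"
proof (cases "Da \<and> Db")
  case True
  have "\<bar>d / (b - a) * (x - a)\<bar> \<le> \<bar>d\<bar>" if "x \<in> {a..b}" for x
  proof -
    have "\<bar>d / (b - a) * (x - a)\<bar> = \<bar>d\<bar> * ((x - a) / (b - a))"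
      using that assms by (simp add: abs_mult)
    also have "\<dots> \<le> \<bar>d\<bar> * 1"
      using that assms by (intro mult_left_mono) auto
    finally show ?thesis
      by simp
  qed
  moreover have "\<bar>d / (b - a)\<bar> * (b - a) = \<bar>d\<bar>"
    using assms by simp
  ultimately show ?thesis
    using that[of 0 "d / (b - a)"] True assms by auto
next
  case False
  then show ?thesis
    using that[of "if Db then d else 0" 0] by auto
qed

lemma boundary_adjusted_antiderivative:
  assumes "a < b" "h \<in> C1_D a b Da Db" "continuous_on {a..b} q"
  defines "E \<equiv> integral {a..b} (\<lambda>x. \<bar>dC1 a b h x - q x\<bar>)"
  obtains k \<beta> where "k \<in> C1_D a b Da Db" "\<And>x. x \<in> {a..b} \<Longrightarrow> dC1 a b k x = q x + \<beta>"
    "\<bar>\<beta>\<bar> * (b - a) \<le> E" "\<And>x. x \<in> {a..b} \<Longrightarrow> \<bar>h x - k x\<bar> \<le> 2 * E"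
    "integral {a..b} (\<lambda>x. (dC1 a b k x)\<^sup>2) \<le> integral {a..b} (\<lambda>x. (q x)\<^sup>2)"
proof -
  have hC: "C1_on a b h" and ha: "Da \<longrightarrow> h a = 0" and hb: "Db \<longrightarrow> h b = 0"
    using assms(2) by (auto simp: C1_D_def)
  define \<rho> where "\<rho> x = dC1 a b h x - q x" for x
  define D where "D x = integral {a..x} \<rho>" for x
  have \<rho>: "continuous_on {a..b} \<rho>"
    unfolding \<rho>_def using assms(1,3) hC by (intro continuous_intros continuous_on_dC1)
  have D_le: "\<bar>D x\<bar> \<le> E" if "x \<in> {a..b}" for x
    unfolding D_def E_def \<rho>_def[symmetric] using \<rho> that by (rule abs_integral_upto_le)
  obtain \<alpha> \<beta> where \<alpha>: "Da \<longrightarrow> \<alpha> = 0" and \<beta>: "Db \<longrightarrow> \<alpha> + \<beta> * (b - a) = D b"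
    and \<beta>_cases: "\<beta> = 0 \<or> Da \<and> Db \<and> \<beta> * (b - a) = D b" and \<beta>_le: "\<bar>\<beta>\<bar> * (b - a) \<le> \<bar>D b\<bar>"
    and \<alpha>\<beta>_le: "\<And>x. x \<in> {a..b} \<Longrightarrow> \<bar>\<alpha> + \<beta> * (x - a)\<bar> \<le> \<bar>D b\<bar>"
    using boundary_corrector[OF assms(1)] by blast
  \<comment> \<open>Subtracting D turns the derivative into q; the affine term repairs the boundary values.\<close>
  define k where "k x = h x - D x + (\<alpha> + \<beta> * (x - a))" for x
  have k': "(k has_real_derivative q x + \<beta>) (at x within {a..b})" if "x \<in> {a..b}" for x
    unfolding k_def D_def using that C1_on_has_derivative[OF assms(1) hC]
    by (auto intro!: derivative_eq_intros integral_has_real_derivative[OF \<rho>] simp: \<rho>_def)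
  have kC: "C1_on a b k"
    using assms(3) by (intro C1_onI[OF _ k'] continuous_intros)
  have dk: "dC1 a b k x = q x + \<beta>" if "x \<in> {a..b}" for x
    using dC1_eq[OF assms(1) that k'[OF that]] .
  have "k a = h a + \<alpha>" "k b = h b + (\<alpha> + \<beta> * (b - a)) - D b"
    by (simp_all add: k_def D_def)
  then have "k \<in> C1_D a b Da Db"
    using kC ha hb \<alpha> \<beta> by (auto simp: C1_D_def)
  moreover have "\<bar>\<beta>\<bar> * (b - a) \<le> E"
    using \<beta>_le D_le[of b] assms(1) by simp
  moreover have "\<bar>h x - k x\<bar> \<le> 2 * E" if "x \<in> {a..b}" for x
    using D_le[OF that] D_le[of b] \<alpha>\<beta>_le[OF that] assms(1) by (simp add: k_def)
  moreover have "integral {a..b} (\<lambda>x. (dC1 a b k x)\<^sup>2) \<le> integral {a..b} (\<lambda>x. (q x)\<^sup>2)"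
  proof -
    have "\<beta> = 0 \<or> integral {a..b} q = - \<beta> * (b - a)"
    proof (cases "\<beta> = 0")
      case False
      then have "Da" "Db" "\<beta> * (b - a) = D b"
        using \<beta>_cases by auto
      have "integral {a..b} q = integral {a..b} (dC1 a b h) - D b"
        using assms(1,3) continuous_on_dC1[OF assms(1) hC] unfolding D_def \<rho>_def
        by (simp add: integral_diff integrable_continuous_interval)
      then show ?thesis
        using integral_dC1[OF assms(1) hC] ha hb \<open>Da\<close> \<open>Db\<close> \<open>\<beta> * (b - a) = D b\<close> by simp
    qed simp
    then have "integral {a..b} (\<lambda>x. (q x + \<beta>)\<^sup>2) \<le> integral {a..b} (\<lambda>x. (q x)\<^sup>2)"
      using assms(1,3) by (intro integral_square_add_const_le) auto
    moreover have "integral {a..b} (\<lambda>x. (dC1 a b k x)\<^sup>2) = integral {a..b} (\<lambda>x. (q x + \<beta>)\<^sup>2)"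
      by (intro integral_cong) (simp add: dk)
    ultimately show ?thesis
      by simp
  qed
  ultimately show ?thesis
    using that dk by blast
qed

lemma derivative_truncation:
  assumes "a < b" "h \<in> C1_D a b Da Db" "M > 0"
  obtains k E where "k \<in> C1_D a b Da Db" "E \<ge> 0"
    "\<And>x. x \<in> {a..b} \<Longrightarrow> \<bar>h x - k x\<bar> \<le> 2 * E"
    "\<And>x. x \<in> {a..b} \<Longrightarrow> \<bar>dC1 a b k x\<bar> \<le> M + E / (b - a)"
    "2 * M * E \<le> integral {a..b} (\<lambda>x. (dC1 a b h x)\<^sup>2) - integral {a..b} (\<lambda>x. (dC1 a b k x)\<^sup>2)"
proof -
  define p where "p = dC1 a b h"
  define T where "T x = max (-M) (min M (p x))" for x
  define E where "E = integral {a..b} (\<lambda>x. \<bar>p x - T x\<bar>)"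
  have p: "continuous_on {a..b} p"
    unfolding p_def using assms(1,2) by (intro continuous_on_dC1) (auto simp: C1_D_def)
  then have T: "continuous_on {a..b} T"
    unfolding T_def by (intro continuous_intros)
  obtain k \<beta> where k: "k \<in> C1_D a b Da Db" and dk: "\<And>x. x \<in> {a..b} \<Longrightarrow> dC1 a b k x = T x + \<beta>"
    and \<beta>: "\<bar>\<beta>\<bar> * (b - a) \<le> E" and hk: "\<And>x. x \<in> {a..b} \<Longrightarrow> \<bar>h x - k x\<bar> \<le> 2 * E"
    and energy: "integral {a..b} (\<lambda>x. (dC1 a b k x)\<^sup>2) \<le> integral {a..b} (\<lambda>x. (T x)\<^sup>2)"
    using boundary_adjusted_antiderivative[OF assms(1,2) T] unfolding E_def p_def by blast
  have "0 \<le> \<bar>\<beta>\<bar> * (b - a)"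
    using assms(1) by simp
  with \<beta> have "E \<ge> 0"
    by linarith
  moreover have "\<bar>dC1 a b k x\<bar> \<le> M + E / (b - a)" if "x \<in> {a..b}" for x
  proof -
    have "\<bar>T x\<bar> \<le> M"
      using \<open>M > 0\<close> by (auto simp: T_def max_def min_def)
    moreover have "\<bar>\<beta>\<bar> \<le> E / (b - a)"
      using \<beta> assms(1) by (simp add: pos_le_divide_eq)
    ultimately show ?thesis
      unfolding dk[OF that] using abs_triangle_ineq[of "T x" \<beta>] by linarith
  qed
  moreover have "2 * M * E \<le> integral {a..b} (\<lambda>x. (p x)\<^sup>2) - integral {a..b} (\<lambda>x. (T x)\<^sup>2)"
    unfolding E_def T_def using p assms(3) by (rule integral_clip_gap)
  ultimately show ?thesis
    using that[OF k _ hk] energy unfolding p_def by force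
qed

lemma small_energy_truncation:
  assumes "a < b" "h \<in> C1_D a b Da Db" "M > 0"
    and h_le: "\<And>x. x \<in> {a..b} \<Longrightarrow> \<bar>h x\<bar> \<le> \<delta>"
    and energy: "integral {a..b} (\<lambda>x. (dC1 a b h x)\<^sup>2) \<le> M * \<delta>"
  obtains k where "k \<in> C1_D a b Da Db" "\<And>x. x \<in> {a..b} \<Longrightarrow> \<bar>k x\<bar> \<le> 2 * \<delta>"
    "C1norm a b k \<le> 2 * \<delta> + (M + \<delta> / (b - a))"
    "M / (b - a) * integral {a..b} (\<lambda>x. \<bar>h x - k x\<bar>)
       \<le> integral {a..b} (\<lambda>x. (dC1 a b h x)\<^sup>2) - integral {a..b} (\<lambda>x. (dC1 a b k x)\<^sup>2)"
proof -
  obtain k E where k: "k \<in> C1_D a b Da Db" and "E \<ge> 0"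
    and hk: "\<And>x. x \<in> {a..b} \<Longrightarrow> \<bar>h x - k x\<bar> \<le> 2 * E"
    and dk: "\<And>x. x \<in> {a..b} \<Longrightarrow> \<bar>dC1 a b k x\<bar> \<le> M + E / (b - a)"
    and gap: "2 * M * E \<le> integral {a..b} (\<lambda>x. (dC1 a b h x)\<^sup>2) - integral {a..b} (\<lambda>x. (dC1 a b k x)\<^sup>2)"
    using derivative_truncation[OF assms(1-3)] by blast
  have hC: "C1_on a b h" and kC: "C1_on a b k"
    using assms(2) k by (simp_all add: C1_D_def)
  have "integral {a..b} (\<lambda>x. (dC1 a b k x)\<^sup>2) \<ge> 0"
    using continuous_on_dC1[OF assms(1) kC]
    by (auto intro!: integral_nonneg integrable_continuous_interval continuous_intros)
  then have "M * (2 * E) \<le> M * \<delta>"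
    using gap energy by (simp add: algebra_simps)
  then have "2 * E \<le> \<delta>"
    using \<open>M > 0\<close> by simp
  then have k_le: "\<bar>k x\<bar> \<le> 2 * \<delta>" if "x \<in> {a..b}" for x
    using h_le[OF that] hk[OF that] by linarith
  have "E / (b - a) \<le> \<delta> / (b - a)"
    using \<open>2 * E \<le> \<delta>\<close> \<open>E \<ge> 0\<close> assms(1) by (intro divide_right_mono) auto
  then have "supnorm a b (dC1 a b k) \<le> M + \<delta> / (b - a)"
    using dk assms(1) by (intro supnorm_le) fastforce+
  then have "C1norm a b k \<le> 2 * \<delta> + (M + \<delta> / (b - a))"
    using supnorm_le[of a b k "2 * \<delta>"] k_le assms(1) by (simp add: C1norm_def)
  moreover have "M / (b - a) * integral {a..b} (\<lambda>x. \<bar>h x - k x\<bar>) \<le> M / (b - a) * ((b - a) * (2 * E))"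
    using integral_abs_le_length_mult[of a b "\<lambda>x. h x - k x"] hk assms(1) \<open>M > 0\<close>
      C1_on_imp_continuous_on[OF assms(1) hC] C1_on_imp_continuous_on[OF assms(1) kC]
    by (intro mult_left_mono) (auto intro!: continuous_intros)
  then have "M / (b - a) * integral {a..b} (\<lambda>x. \<bar>h x - k x\<bar>)
       \<le> integral {a..b} (\<lambda>x. (dC1 a b h x)\<^sup>2) - integral {a..b} (\<lambda>x. (dC1 a b k x)\<^sup>2)"
    using gap assms(1) by simp
  ultimately show ?thesis
    using that k k_le by blast
qed

lemma admissible_iff_C1_D:
  assumes "a < b" "C1_on a b u0"
  shows "v \<in> admissible a b Da Db u0 \<longleftrightarrow> (\<lambda>x. v x - u0 x) \<in> C1_D a b Da Db"
proof -
  have "C1_on a b v" if "C1_on a b (\<lambda>x. v x - u0 x)"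
    using C1_on_add[OF assms(1,2) that] by simp
  then show ?thesis
    using C1_on_diff[OF assms(1) _ assms(2)] by (auto simp: admissible_def C1_D_def)
qed

lemma first_variation_cmult:
  assumes "a < b" "C1_on a b w"
  shows "first_variation a b K G u (\<lambda>x. c * w x) = c * first_variation a b K G u w"
proof -
  have "first_variation a b K G u (\<lambda>x. c * w x)
      = integral {a..b} (\<lambda>x. c * (2 * (dC1 a b u x - K) * dC1 a b w x + G (u x) * w x))"
    unfolding first_variation_def by (intro integral_cong) (simp add: dC1_cmult[OF assms] algebra_simps)
  then show ?thesis
    by (simp add: first_variation_def)
qed

context
  fixes a b K :: real and g G :: "real \<Rightarrow> real"
  assumes ab: "a < b"
    and g': "\<And>y. (g has_real_derivative G y) (at y)"
    and G: "continuous_on UNIV G"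
begin

lemma continuous_on_compose_g [continuous_intros]:
  assumes "continuous_on S f"
  shows "continuous_on S (\<lambda>x. g (f x))"
proof -
  have "continuous_on UNIV g"
    using g' DERIV_continuous by (blast intro: continuous_at_imp_continuous_on)
  then show ?thesis
    using continuous_on_compose2[of UNIV g S f] assms by auto
qed

lemma continuous_on_compose_G [continuous_intros]:
  "continuous_on S f \<Longrightarrow> continuous_on S (\<lambda>x. G (f x))"
  using continuous_on_compose2[OF G, of S f] by auto

lemma Phi_add_expansion:
  assumes u: "C1_on a b u" and h: "C1_on a b h"
  shows "Phi a b K g (\<lambda>x. u x + h x) - Phi a b K g u =
    first_variation a b K G u h + integral {a..b} (\<lambda>x. (dC1 a b h x)\<^sup>2)
    + integral {a..b} (\<lambda>x. g (u x + h x) - g (u x) - G (u x) * h x)"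
proof -
  note cont = C1_on_imp_continuous_on[OF ab u] C1_on_imp_continuous_on[OF ab h]
    continuous_on_dC1[OF ab u] continuous_on_dC1[OF ab h]
  have "Phi a b K g (\<lambda>x. u x + h x)
      = integral {a..b} (\<lambda>x. (dC1 a b u x + dC1 a b h x - K)\<^sup>2 + g (u x + h x))"
    unfolding Phi_def by (intro integral_cong) (simp add: dC1_add[OF ab u h])
  then have "Phi a b K g (\<lambda>x. u x + h x) - Phi a b K g u = integral {a..b}
      (\<lambda>x. ((dC1 a b u x + dC1 a b h x - K)\<^sup>2 + g (u x + h x)) - ((dC1 a b u x - K)\<^sup>2 + g (u x)))"
    unfolding Phi_def using cont
    by (subst integral_diff) (auto intro!: integrable_continuous_interval continuous_intros)
  also have "\<dots> = integral {a..b}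
      (\<lambda>x. ((2 * (dC1 a b u x - K) * dC1 a b h x + G (u x) * h x) + (dC1 a b h x)\<^sup>2)
         + (g (u x + h x) - g (u x) - G (u x) * h x))"
    by (intro integral_cong) (simp add: power2_eq_square algebra_simps)
  also have "\<dots> = first_variation a b K G u h + integral {a..b} (\<lambda>x. (dC1 a b h x)\<^sup>2)
    + integral {a..b} (\<lambda>x. g (u x + h x) - g (u x) - G (u x) * h x)"
    unfolding first_variation_def using cont
    by (subst integral_add integral_add; auto intro!: integrable_continuous_interval continuous_intros)+
  finally show ?thesis .
qed

context
  fixes u0 :: "real \<Rightarrow> real"
  assumes u0: "C1_on a b u0"
begin

lemma integral_linearization_error_le:
  assumes "\<eta> > 0"
  obtains r where "r > 0"
    "\<And>h k. continuous_on {a..b} h \<Longrightarrow> continuous_on {a..b} k \<Longrightarrow>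
       (\<And>x. x \<in> {a..b} \<Longrightarrow> \<bar>h x\<bar> \<le> r \<and> \<bar>k x\<bar> \<le> r) \<Longrightarrow>
       \<bar>integral {a..b} (\<lambda>x. g (u0 x + h x) - g (u0 x + k x) - G (u0 x) * (h x - k x))\<bar>
         \<le> \<eta> * integral {a..b} (\<lambda>x. \<bar>h x - k x\<bar>)"
proof -
  have u0c: "continuous_on {a..b} u0"
    using ab u0 by (rule C1_on_imp_continuous_on)
  then have "bounded (u0 ` {a..b})"
    by (intro compact_imp_bounded compact_continuous_image) auto
  then obtain r where "r > 0" and lin: "\<And>c y z. c \<in> u0 ` {a..b} \<Longrightarrow> \<bar>y - c\<bar> \<le> r \<Longrightarrow>
      \<bar>z - c\<bar> \<le> r \<Longrightarrow> \<bar>g y - g z - G c * (y - z)\<bar> \<le> \<eta> * \<bar>y - z\<bar>"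
    using uniform_linearization[OF g' G _ assms] by blast
  have "\<bar>integral {a..b} (\<lambda>x. g (u0 x + h x) - g (u0 x + k x) - G (u0 x) * (h x - k x))\<bar>
         \<le> \<eta> * integral {a..b} (\<lambda>x. \<bar>h x - k x\<bar>)"
    if hk: "continuous_on {a..b} h" "continuous_on {a..b} k"
      and small: "\<And>x. x \<in> {a..b} \<Longrightarrow> \<bar>h x\<bar> \<le> r \<and> \<bar>k x\<bar> \<le> r"
    for h k
  proof -
    have "\<bar>g (u0 x + h x) - g (u0 x + k x) - G (u0 x) * (h x - k x)\<bar> \<le> \<eta> * \<bar>h x - k x\<bar>"
      if "x \<in> {a..b}" for x
      using lin[of "u0 x" "u0 x + h x" "u0 x + k x"] small[OF that] that by auto
    then have "norm (integral {a..b} (\<lambda>x. g (u0 x + h x) - g (u0 x + k x) - G (u0 x) * (h x - k x)))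
        \<le> integral {a..b} (\<lambda>x. \<eta> * \<bar>h x - k x\<bar>)"
      using hk u0c
      by (intro integral_norm_bound_integral) (auto intro!: integrable_continuous_interval continuous_intros)
    then show ?thesis
      by simp
  qed
  with \<open>r > 0\<close> show ?thesis
    using that by blast
qed

lemma Phi_scaled_variation_le:
  assumes wC: "C1_on a b w" and "\<eta> > 0"
  obtains r where "r > 0"
    "\<And>t. t > 0 \<Longrightarrow> (\<And>x. x \<in> {a..b} \<Longrightarrow> t * \<bar>w x\<bar> \<le> r) \<Longrightarrow>
       Phi a b K g (\<lambda>x. u0 x + t * w x) - Phi a b K g u0
         \<le> t * (first_variation a b K G u0 w + t * integral {a..b} (\<lambda>x. (dC1 a b w x)\<^sup>2)
                 + \<eta> * integral {a..b} (\<lambda>x. \<bar>w x\<bar>))"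
proof -
  have wc: "continuous_on {a..b} w"
    using ab wC by (rule C1_on_imp_continuous_on)
  obtain r where "r > 0" and rem: "\<And>h k. continuous_on {a..b} h \<Longrightarrow> continuous_on {a..b} k \<Longrightarrow>
       (\<And>x. x \<in> {a..b} \<Longrightarrow> \<bar>h x\<bar> \<le> r \<and> \<bar>k x\<bar> \<le> r) \<Longrightarrow>
       \<bar>integral {a..b} (\<lambda>x. g (u0 x + h x) - g (u0 x + k x) - G (u0 x) * (h x - k x))\<bar>
         \<le> \<eta> * integral {a..b} (\<lambda>x. \<bar>h x - k x\<bar>)"
    using integral_linearization_error_le[OF \<open>\<eta> > 0\<close>] by blast
  have "Phi a b K g (\<lambda>x. u0 x + t * w x) - Phi a b K g u0
      \<le> t * (first_variation a b K G u0 w + t * integral {a..b} (\<lambda>x. (dC1 a b w x)\<^sup>2)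
              + \<eta> * integral {a..b} (\<lambda>x. \<bar>w x\<bar>))"
    if "t > 0" and small: "\<And>x. x \<in> {a..b} \<Longrightarrow> t * \<bar>w x\<bar> \<le> r" for t
  proof -
    have "integral {a..b} (\<lambda>x. (dC1 a b (\<lambda>x. t * w x) x)\<^sup>2)
        = integral {a..b} (\<lambda>x. t\<^sup>2 * (dC1 a b w x)\<^sup>2)"
      by (intro integral_cong) (simp add: dC1_cmult[OF ab wC] power_mult_distrib)
    moreover have "continuous_on {a..b} (\<lambda>x. t * w x)"
      using wc by (intro continuous_intros)
    then have "integral {a..b} (\<lambda>x. g (u0 x + t * w x) - g (u0 x) - G (u0 x) * (t * w x))
        \<le> \<eta> * integral {a..b} (\<lambda>x. \<bar>t * w x\<bar>)"
      using rem[of "\<lambda>x. t * w x" "\<lambda>x. 0"] small \<open>r > 0\<close> \<open>t > 0\<close>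
      by (force simp: abs_mult dest: abs_le_D1)
    ultimately show ?thesis
      using Phi_add_expansion[OF u0 C1_on_cmult[OF ab wC, of t]] \<open>t > 0\<close>
      by (simp add: first_variation_cmult[OF ab wC] abs_mult power2_eq_square algebra_simps)
  qed
  with \<open>r > 0\<close> show ?thesis
    using that by blast
qed

end

context
  fixes u0 :: "real \<Rightarrow> real" and Da Db :: bool and \<epsilon> :: real
  assumes u0: "C1_on a b u0" and "\<epsilon> > 0"
    and weak_min: "\<And>h. h \<in> C1_D a b Da Db \<Longrightarrow> C1norm a b h < \<epsilon> \<Longrightarrow>
                     Phi a b K g u0 \<le> Phi a b K g (\<lambda>x. u0 x + h x)"
begin

lemma first_variation_nonneg:
  assumes w: "w \<in> C1_D a b Da Db"
  shows "0 \<le> first_variation a b K G u0 w"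
proof (rule field_le_epsilon)
  fix e :: real
  assume "e > 0"
  have wC: "C1_on a b w"
    using w by (simp add: C1_D_def)
  note wc = C1_on_imp_continuous_on[OF ab wC] and w'c = continuous_on_dC1[OF ab wC]
  define I1 where "I1 = integral {a..b} (\<lambda>x. \<bar>w x\<bar>)"
  define I2 where "I2 = integral {a..b} (\<lambda>x. (dC1 a b w x)\<^sup>2)"
  define S where "S = C1norm a b w + 1"
  have "I1 \<ge> 0" "I2 \<ge> 0"
    using wc w'c unfolding I1_def I2_def
    by (auto intro!: integral_nonneg integrable_continuous_interval continuous_intros)
  have w_le: "\<bar>w x\<bar> < S" if "x \<in> {a..b}" for x
    using abs_le_supnorm[OF wc that] supnorm_nonneg[OF _ w'c] ab by (simp add: S_def C1norm_def)
  have "a \<in> {a..b}"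
    using ab by simp
  then have "S > 0"
    using le_less_trans[OF abs_ge_zero w_le] by blast
  define \<eta> where "\<eta> = e / (2 * (I1 + 1))"
  have "\<eta> > 0" "\<eta> * I1 \<le> e / 2"
    using \<open>e > 0\<close> \<open>I1 \<ge> 0\<close> by (simp_all add: \<eta>_def field_simps)
  obtain r where "r > 0" and Phi_le: "\<And>t. t > 0 \<Longrightarrow> (\<And>x. x \<in> {a..b} \<Longrightarrow> t * \<bar>w x\<bar> \<le> r) \<Longrightarrow>
       Phi a b K g (\<lambda>x. u0 x + t * w x) - Phi a b K g u0
         \<le> t * (first_variation a b K G u0 w + t * I2 + \<eta> * I1)"
    using Phi_scaled_variation_le[OF u0 wC \<open>\<eta> > 0\<close>] unfolding I1_def I2_def by blast
  define t where "t = min (\<epsilon> / S) (min (r / S) (e / (2 * (I2 + 1))))"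
  have "t > 0"
    using \<open>\<epsilon> > 0\<close> \<open>r > 0\<close> \<open>S > 0\<close> \<open>e > 0\<close> \<open>I2 \<ge> 0\<close> by (simp add: t_def)
  have "t \<le> \<epsilon> / S" "t \<le> r / S" "t \<le> e / (2 * (I2 + 1))"
    by (simp_all add: t_def)
  then have "t * S \<le> \<epsilon>" "t * S \<le> r" "t * I2 \<le> e / 2"
    using \<open>S > 0\<close> \<open>I2 \<ge> 0\<close> \<open>t > 0\<close> by (simp_all add: field_simps)
  have tw: "(\<lambda>x. t * w x) \<in> C1_D a b Da Db"
    using w C1_on_cmult[OF ab wC] by (auto simp: C1_D_def)
  have "C1norm a b (\<lambda>x. t * w x) \<le> t * (S - 1)"
    using C1norm_cmult_le[OF ab wC, of t] \<open>t > 0\<close> by (simp add: S_def)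
  also have "\<dots> < \<epsilon>"
    using \<open>t > 0\<close> \<open>t * S \<le> \<epsilon>\<close> by (simp add: algebra_simps)
  finally have "0 \<le> Phi a b K g (\<lambda>x. u0 x + t * w x) - Phi a b K g u0"
    using weak_min[OF tw] by simp
  also have "\<dots> \<le> t * (first_variation a b K G u0 w + t * I2 + \<eta> * I1)"
  proof (rule Phi_le[OF \<open>t > 0\<close>])
    show "t * \<bar>w x\<bar> \<le> r" if "x \<in> {a..b}" for x
      using mult_strict_left_mono[OF w_le[OF that] \<open>t > 0\<close>] \<open>t * S \<le> r\<close> by linarith
  qed
  finally show "0 \<le> first_variation a b K G u0 w + e"
    using \<open>t > 0\<close> \<open>t * I2 \<le> e / 2\<close> \<open>\<eta> * I1 \<le> e / 2\<close> by (simp add: zero_le_mult_iff)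
qed

lemma first_variation_eq_0:
  assumes "w \<in> C1_D a b Da Db"
  shows "first_variation a b K G u0 w = 0"
proof -
  have wC: "C1_on a b w"
    using assms by (simp add: C1_D_def)
  then have "(\<lambda>x. - w x) \<in> C1_D a b Da Db"
    using assms C1_on_cmult[OF ab wC, of "-1"] by (auto simp: C1_D_def)
  then have "0 \<le> - first_variation a b K G u0 w"
    using first_variation_nonneg[OF \<open>(\<lambda>x. - w x) \<in> C1_D a b Da Db\<close>]
      first_variation_cmult[OF ab wC, of K G u0 "-1"] by simp
  then show ?thesis
    using first_variation_nonneg[OF assms] by linarith
qed

lemma Phi_comparison:
  assumes "\<eta> > 0"
  obtains r where "r > 0"
    "\<And>h k. h \<in> C1_D a b Da Db \<Longrightarrow> k \<in> C1_D a b Da Db \<Longrightarrow>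
       (\<And>x. x \<in> {a..b} \<Longrightarrow> \<bar>h x\<bar> \<le> r \<and> \<bar>k x\<bar> \<le> r) \<Longrightarrow>
       integral {a..b} (\<lambda>x. (dC1 a b h x)\<^sup>2) - integral {a..b} (\<lambda>x. (dC1 a b k x)\<^sup>2)
         - \<eta> * integral {a..b} (\<lambda>x. \<bar>h x - k x\<bar>)
       \<le> Phi a b K g (\<lambda>x. u0 x + h x) - Phi a b K g (\<lambda>x. u0 x + k x)"
proof -
  obtain r where "r > 0" and rem: "\<And>h k. continuous_on {a..b} h \<Longrightarrow> continuous_on {a..b} k \<Longrightarrow>
       (\<And>x. x \<in> {a..b} \<Longrightarrow> \<bar>h x\<bar> \<le> r \<and> \<bar>k x\<bar> \<le> r) \<Longrightarrow>
       \<bar>integral {a..b} (\<lambda>x. g (u0 x + h x) - g (u0 x + k x) - G (u0 x) * (h x - k x))\<bar>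
         \<le> \<eta> * integral {a..b} (\<lambda>x. \<bar>h x - k x\<bar>)"
    using integral_linearization_error_le[OF u0 assms] by blast
  have "integral {a..b} (\<lambda>x. (dC1 a b h x)\<^sup>2) - integral {a..b} (\<lambda>x. (dC1 a b k x)\<^sup>2)
         - \<eta> * integral {a..b} (\<lambda>x. \<bar>h x - k x\<bar>)
       \<le> Phi a b K g (\<lambda>x. u0 x + h x) - Phi a b K g (\<lambda>x. u0 x + k x)"
    if h: "h \<in> C1_D a b Da Db" and k: "k \<in> C1_D a b Da Db"
      and small: "\<And>x. x \<in> {a..b} \<Longrightarrow> \<bar>h x\<bar> \<le> r \<and> \<bar>k x\<bar> \<le> r" for h k
  proof -
    have hC: "C1_on a b h" and kC: "C1_on a b k"
      using h k by (auto simp: C1_D_def)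
    note cont = C1_on_imp_continuous_on[OF ab u0] C1_on_imp_continuous_on[OF ab hC]
      C1_on_imp_continuous_on[OF ab kC]
    have "integral {a..b} (\<lambda>x. g (u0 x + h x) - g (u0 x) - G (u0 x) * h x)
        - integral {a..b} (\<lambda>x. g (u0 x + k x) - g (u0 x) - G (u0 x) * k x)
        = integral {a..b} (\<lambda>x. g (u0 x + h x) - g (u0 x + k x) - G (u0 x) * (h x - k x))"
      using cont
      by (subst integral_diff[symmetric])
         (auto intro!: integrable_continuous_interval continuous_intros integral_cong
           simp: algebra_simps)
    moreover have "\<bar>integral {a..b} (\<lambda>x. g (u0 x + h x) - g (u0 x + k x) - G (u0 x) * (h x - k x))\<bar>
        \<le> \<eta> * integral {a..b} (\<lambda>x. \<bar>h x - k x\<bar>)"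
      using rem cont small by blast
    ultimately show ?thesis
      using Phi_add_expansion[OF u0 hC] Phi_add_expansion[OF u0 kC]
        first_variation_eq_0[OF h] first_variation_eq_0[OF k]
      by linarith
  qed
  with \<open>r > 0\<close> show ?thesis
    using that by blast
qed

lemma Phi_increment_ge:
  assumes "\<eta> > 0"
  obtains r where "r > 0"
    "\<And>h. h \<in> C1_D a b Da Db \<Longrightarrow> (\<And>x. x \<in> {a..b} \<Longrightarrow> \<bar>h x\<bar> \<le> r) \<Longrightarrow>
       integral {a..b} (\<lambda>x. (dC1 a b h x)\<^sup>2) - \<eta> * integral {a..b} (\<lambda>x. \<bar>h x\<bar>)
       \<le> Phi a b K g (\<lambda>x. u0 x + h x) - Phi a b K g u0"
proof -
  obtain r where "r > 0" and cmp: "\<And>h k. h \<in> C1_D a b Da Db \<Longrightarrow> k \<in> C1_D a b Da Db \<Longrightarrow>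
       (\<And>x. x \<in> {a..b} \<Longrightarrow> \<bar>h x\<bar> \<le> r \<and> \<bar>k x\<bar> \<le> r) \<Longrightarrow>
       integral {a..b} (\<lambda>x. (dC1 a b h x)\<^sup>2) - integral {a..b} (\<lambda>x. (dC1 a b k x)\<^sup>2)
         - \<eta> * integral {a..b} (\<lambda>x. \<bar>h x - k x\<bar>)
       \<le> Phi a b K g (\<lambda>x. u0 x + h x) - Phi a b K g (\<lambda>x. u0 x + k x)"
    using Phi_comparison[OF assms] by blast
  have zero: "(\<lambda>_. 0) \<in> C1_D a b Da Db"
    using C1_onI[of a b "\<lambda>_. 0"] by (simp add: C1_D_def)
  have "integral {a..b} (\<lambda>x. (dC1 a b (\<lambda>_. 0) x)\<^sup>2) = integral {a..b} (\<lambda>_. 0)"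
    using dC1_eq[OF ab] by (intro integral_cong) simp
  then have "integral {a..b} (\<lambda>x. (dC1 a b h x)\<^sup>2) - \<eta> * integral {a..b} (\<lambda>x. \<bar>h x\<bar>)
      \<le> Phi a b K g (\<lambda>x. u0 x + h x) - Phi a b K g u0"
    if "h \<in> C1_D a b Da Db" "\<And>x. x \<in> {a..b} \<Longrightarrow> \<bar>h x\<bar> \<le> r" for h
    using cmp[OF that(1) zero] that(2) \<open>r > 0\<close> by simp
  with \<open>r > 0\<close> show ?thesis
    using that by blast
qed

lemma strong_minimality:
  obtains \<delta> where "\<delta> > 0"
    "\<And>h. h \<in> C1_D a b Da Db \<Longrightarrow> supnorm a b h < \<delta> \<Longrightarrow>
       Phi a b K g u0 \<le> Phi a b K g (\<lambda>x. u0 x + h x)"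
proof -
  define L where "L = b - a"
  define M where "M = \<epsilon> / 4"
  have "L > 0" "M > 0"
    using ab \<open>\<epsilon> > 0\<close> by (simp_all add: L_def M_def)
  obtain r1 where "r1 > 0" and steep: "\<And>h. h \<in> C1_D a b Da Db \<Longrightarrow> (\<And>x. x \<in> {a..b} \<Longrightarrow> \<bar>h x\<bar> \<le> r1) \<Longrightarrow>
       integral {a..b} (\<lambda>x. (dC1 a b h x)\<^sup>2) - M / L * integral {a..b} (\<lambda>x. \<bar>h x\<bar>)
       \<le> Phi a b K g (\<lambda>x. u0 x + h x) - Phi a b K g u0"
    using Phi_increment_ge[of "M / L"] \<open>L > 0\<close> \<open>M > 0\<close> by auto
  obtain r2 where "r2 > 0" and cmp: "\<And>h k. h \<in> C1_D a b Da Db \<Longrightarrow> k \<in> C1_D a b Da Db \<Longrightarrow>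
       (\<And>x. x \<in> {a..b} \<Longrightarrow> \<bar>h x\<bar> \<le> r2 \<and> \<bar>k x\<bar> \<le> r2) \<Longrightarrow>
       integral {a..b} (\<lambda>x. (dC1 a b h x)\<^sup>2) - integral {a..b} (\<lambda>x. (dC1 a b k x)\<^sup>2)
         - M / L * integral {a..b} (\<lambda>x. \<bar>h x - k x\<bar>)
       \<le> Phi a b K g (\<lambda>x. u0 x + h x) - Phi a b K g (\<lambda>x. u0 x + k x)"
    using Phi_comparison[of "M / L"] \<open>L > 0\<close> \<open>M > 0\<close> by auto
  define \<delta> where "\<delta> = min (min r1 r2 / 2) (min (\<epsilon> / 8) (\<epsilon> * L / 8))"
  have "\<delta> > 0"
    using \<open>r1 > 0\<close> \<open>r2 > 0\<close> \<open>\<epsilon> > 0\<close> \<open>L > 0\<close> by (simp add: \<delta>_def)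
  have "\<delta> \<le> r1" "2 * \<delta> \<le> r2" "2 * \<delta> \<le> \<epsilon> / 4" "\<delta> / L \<le> \<epsilon> / 8"
    using \<open>L > 0\<close> \<open>r1 > 0\<close> by (auto simp: \<delta>_def pos_divide_le_eq)
  have "Phi a b K g u0 \<le> Phi a b K g (\<lambda>x. u0 x + h x)"
    if h: "h \<in> C1_D a b Da Db" and "supnorm a b h < \<delta>" for h
  proof -
    have hC: "C1_on a b h"
      using h by (simp add: C1_D_def)
    have h_le: "\<bar>h x\<bar> \<le> \<delta>" if "x \<in> {a..b}" for x
      using abs_le_supnorm[OF C1_on_imp_continuous_on[OF ab hC] that] \<open>supnorm a b h < \<delta>\<close> by simp
    define Q where "Q = integral {a..b} (\<lambda>x. (dC1 a b h x)\<^sup>2)"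
    show ?thesis
    proof (cases "M * \<delta> \<le> Q")
      case True
      have "Q - M / L * integral {a..b} (\<lambda>x. \<bar>h x\<bar>) \<le> Phi a b K g (\<lambda>x. u0 x + h x) - Phi a b K g u0"
        unfolding Q_def using h_le \<open>\<delta> \<le> r1\<close> by (intro steep[OF h]) force
      moreover have "M / L * integral {a..b} (\<lambda>x. \<bar>h x\<bar>) \<le> M / L * (L * \<delta>)"
        using integral_abs_le_length_mult[OF _ C1_on_imp_continuous_on[OF ab hC] h_le] ab \<open>L > 0\<close> \<open>M > 0\<close>
        by (intro mult_left_mono) (auto simp: L_def)
      ultimately show ?thesis
        using True \<open>L > 0\<close> by simp
    next
      case False
      obtain k where k: "k \<in> C1_D a b Da Db" and k_le: "\<And>x. x \<in> {a..b} \<Longrightarrow> \<bar>k x\<bar> \<le> 2 * \<delta>"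
        and k_norm: "C1norm a b k \<le> 2 * \<delta> + (M + \<delta> / L)"
        and gap: "M / L * integral {a..b} (\<lambda>x. \<bar>h x - k x\<bar>) \<le> Q - integral {a..b} (\<lambda>x. (dC1 a b k x)\<^sup>2)"
        using small_energy_truncation[OF ab h \<open>M > 0\<close> h_le] False unfolding Q_def L_def by auto
      have "C1norm a b k < \<epsilon>"
        using k_norm \<open>2 * \<delta> \<le> \<epsilon> / 4\<close> \<open>\<delta> / L \<le> \<epsilon> / 8\<close> \<open>\<epsilon> > 0\<close> unfolding M_def by linarith
      then have "Phi a b K g u0 \<le> Phi a b K g (\<lambda>x. u0 x + k x)"
        using weak_min[OF k] by simp
      moreover have "\<bar>h x\<bar> \<le> r2 \<and> \<bar>k x\<bar> \<le> r2" if "x \<in> {a..b}" for x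
        using h_le[OF that] k_le[OF that] \<open>2 * \<delta> \<le> r2\<close> \<open>\<delta> > 0\<close> by simp
      then have "Q - integral {a..b} (\<lambda>x. (dC1 a b k x)\<^sup>2) - M / L * integral {a..b} (\<lambda>x. \<bar>h x - k x\<bar>)
          \<le> Phi a b K g (\<lambda>x. u0 x + h x) - Phi a b K g (\<lambda>x. u0 x + k x)"
        unfolding Q_def by (rule cmp[OF h k])
      ultimately show ?thesis
        using gap by linarith
    qed
  qed
  with \<open>\<delta> > 0\<close> show ?thesis
    using that by blast
qed

end

end


theorem proposition2p3:
  fixes a b K :: real and g u0 :: "real \<Rightarrow> real" and Da Db :: bool
  assumes "a < b"
    and "g C1_differentiable_on UNIV"
    and "C1_on a b u0"
    and "weak_minimizer a b (Phi a b K g) (admissible a b Da Db u0) u0"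
  shows "strong_minimizer a b (Phi a b K g) (admissible a b Da Db u0) u0"
proof -
  obtain G where g': "\<And>y. (g has_real_derivative G y) (at y)" and G: "continuous_on UNIV G"
    using assms(2)
    by (auto simp: C1_differentiable_on_def has_real_derivative_iff_has_vector_derivative)
  obtain \<epsilon> where "\<epsilon> > 0" and weak_min: "\<And>v. v \<in> admissible a b Da Db u0 \<Longrightarrow>
      C1norm a b (\<lambda>x. v x - u0 x) < \<epsilon> \<Longrightarrow> Phi a b K g u0 \<le> Phi a b K g v"
    using assms(4) unfolding weak_minimizer_def by auto
  have "Phi a b K g u0 \<le> Phi a b K g (\<lambda>x. u0 x + h x)"
    if "h \<in> C1_D a b Da Db" "C1norm a b h < \<epsilon>" for h
    using weak_min[of "\<lambda>x. u0 x + h x"] admissible_iff_C1_D[OF assms(1,3)] that by simp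
  then obtain \<delta> where "\<delta> > 0" and strong: "\<And>h. h \<in> C1_D a b Da Db \<Longrightarrow> supnorm a b h < \<delta> \<Longrightarrow>
      Phi a b K g u0 \<le> Phi a b K g (\<lambda>x. u0 x + h x)"
    using strong_minimality[OF assms(1) g' G assms(3) \<open>\<epsilon> > 0\<close>] by blast
  have "Phi a b K g u0 \<le> Phi a b K g v"
    if "v \<in> admissible a b Da Db u0" "supnorm a b (\<lambda>x. v x - u0 x) < \<delta>" for v
    using strong[of "\<lambda>x. v x - u0 x"] admissible_iff_C1_D[OF assms(1,3)] that by simp
  with \<open>\<delta> > 0\<close> show ?thesis
    using assms(4) unfolding strong_minimizer_def weak_minimizer_def by blast
qed

end
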